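(* Let $x \in \mathbb{R}^n$ be deterministic, $y\in\mathbb{R}^n$ deterministic, and $f:\mathbb{R}^n\to\mathbb{R}^n$. Let $\tilde a,\tilde b,\tilde c$ be random vectors in $\mathbb{R}^n$ such that all $3n$ entries are mutually independent, $\mathbb{E}[\tilde a_i] = \mathbb{E}[\tilde b_i] = \mathbb{E}[\tilde c_i] = x_i$ for all $i$, and for each $i$ the variables $\tilde a_i,\tilde b_i,\tilde c_i$ have common $k$-th central moments $\mu_i^{[k]}$ for $k\le 4$. Let $\gamma := \max_{1\le i\le n}|x_i - f(y)_i|$ and suppose there is a constant $\alpha$ with $\max_{1\le i\le n}\max\{\mu_i^{[4]}, \mu_i^{[3]}\gamma, \gamma^4\}\le\alpha$. Let $\widetilde{\mathrm{uSE}}_i := (\tilde a_i - f(y)_i)^2 - \frac{(\tilde b_i - \tilde c_i)^2}{2}$. Then $\mathrm{Var}[\widetilde{\mathrm{uSE}}_i] \le 14\alpha$ for every $1\le i\le n$. *)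

theory Defs
  imports "HOL-Probability.Probability"
begin

text \<open>Labels for the three random vectors a, b, c, used to index the
  family of all 3n scalar entries.\<close>
datatype vlabel = LA | LB | LC

definition entry_family ::
  "('w \<Rightarrow> real^'n) \<Rightarrow> ('w \<Rightarrow> real^'n) \<Rightarrow> ('w \<Rightarrow> real^'n)
     \<Rightarrow> vlabel \<times> 'n \<Rightarrow> 'w \<Rightarrow> real" where
  "entry_family a b c = (\<lambda>(l, i) \<omega>. (case l of LA \<Rightarrow> a \<omega> | LB \<Rightarrow> b \<omega> | LC \<Rightarrow> c \<omega>) $ i)"

end

theory Submission
  imports Defs
begin

(* Write A, B, C for the centred i-th entries of a, b, c and d = x_i - f(y)_i, so that the
   estimator is (A + d)^2 - (B - C)^2/2.  Its two summands are independent (the first depends on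
   a_i only, the second on b_i and c_i only), so the variance is the sum of their variances.  Each
   of these is at most the second moment about a suitable point:
     Var((A + d)^2) <= E[((A + d)^2 - d^2)^2] <= 6 E[A^4] + 4 d^4,
     Var((B - C)^2/2) <= E[(B - C)^4]/4 <= 2 E[B^4] + 2 E[C^4].
   This gives 10 mu4 + 4 d^4 <= 14 alpha, since |d| <= gamma. *)

lemma power4_diff_le:
  fixes s t :: real
  shows "(s - t) ^ 4 \<le> 8 * s ^ 4 + 8 * t ^ 4"
proof -
  have "(s - t)\<^sup>2 \<le> 2 * s\<^sup>2 + 2 * t\<^sup>2"
    using zero_le_power2[of "s + t"] by (simp add: power2_diff power2_sum)
  then have "((s - t)\<^sup>2)\<^sup>2 \<le> (2 * s\<^sup>2 + 2 * t\<^sup>2)\<^sup>2"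
    by (intro power_mono) auto
  also have "\<dots> \<le> 8 * s ^ 4 + 8 * t ^ 4"
    using zero_le_power2[of "s\<^sup>2 - t\<^sup>2"] by (simp add: power2_eq_square power4_eq_xxxx algebra_simps)
  finally show ?thesis by (simp add: power_mult[symmetric])
qed

lemma square_shift_sq_le:
  fixes t d :: real
  shows "((t + d)\<^sup>2 - d\<^sup>2)\<^sup>2 \<le> 6 * t ^ 4 + 4 * d ^ 4"
proof -
  have "((t + d)\<^sup>2 - d\<^sup>2)\<^sup>2 = (t\<^sup>2 + 2 * d * t)\<^sup>2"
    by (simp add: power2_sum mult.commute mult.left_commute)
  also have "\<dots> \<le> 2 * t ^ 4 + 8 * d\<^sup>2 * t\<^sup>2"
    using zero_le_power2[of "t\<^sup>2 - 2 * d * t"] by (simp add: power2_eq_square power4_eq_xxxx algebra_simps)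
  also have "\<dots> \<le> 6 * t ^ 4 + 4 * d ^ 4"
    using zero_le_power2[of "t\<^sup>2 - d\<^sup>2"] by (simp add: power2_eq_square power4_eq_xxxx algebra_simps)
  finally show ?thesis .
qed

lemma (in finite_measure) integrable_power_le:
  fixes X :: "'a \<Rightarrow> real"
  assumes X: "X \<in> borel_measurable M" and int: "integrable M (\<lambda>\<omega>. \<bar>X \<omega>\<bar> ^ n)" and "k \<le> n"
  shows "integrable M (\<lambda>\<omega>. X \<omega> ^ k)"
proof (rule Bochner_Integration.integrable_bound)
  show "integrable M (\<lambda>\<omega>. 1 + \<bar>X \<omega>\<bar> ^ n)"
    using int by simp
  have "\<bar>s\<bar> ^ k \<le> 1 + \<bar>s\<bar> ^ n" for s :: real
  proof (cases "\<bar>s\<bar> \<le> 1")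
    case True
    then show ?thesis by (simp add: power_le_one add_increasing2)
  next
    case False
    then show ?thesis using \<open>k \<le> n\<close> by (simp add: power_increasing add_increasing)
  qed
  then show "AE \<omega> in M. norm (X \<omega> ^ k) \<le> norm (1 + \<bar>X \<omega>\<bar> ^ n)"
    by (simp add: power_abs)
qed (use X in simp)

lemma (in finite_measure) integrable_diff_power:
  fixes X Y :: "'a \<Rightarrow> real"
  assumes X: "X \<in> borel_measurable M" "integrable M (\<lambda>\<omega>. X \<omega> ^ 4)"
    and Y: "Y \<in> borel_measurable M" "integrable M (\<lambda>\<omega>. Y \<omega> ^ 4)"
    and "k \<le> 4"
  shows "integrable M (\<lambda>\<omega>. (X \<omega> - Y \<omega>) ^ k)"
proof (rule integrable_power_le[OF _ _ \<open>k \<le> 4\<close>])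
  show "integrable M (\<lambda>\<omega>. \<bar>X \<omega> - Y \<omega>\<bar> ^ 4)"
  proof (rule Bochner_Integration.integrable_bound)
    show "integrable M (\<lambda>\<omega>. 8 * X \<omega> ^ 4 + 8 * Y \<omega> ^ 4)"
      using X Y by simp
    show "AE \<omega> in M. norm (\<bar>X \<omega> - Y \<omega>\<bar> ^ 4) \<le> norm (8 * X \<omega> ^ 4 + 8 * Y \<omega> ^ 4)"
      using power4_diff_le by (simp add: zero_le_even_power)
  qed (use X Y in simp)
qed (use X Y in simp)

lemma (in prob_space) variance_le_expectation_sq_dev:
  fixes X :: "'a \<Rightarrow> real"
  assumes "integrable M X" "integrable M (\<lambda>\<omega>. (X \<omega>)\<^sup>2)"
  shows "variance X \<le> expectation (\<lambda>\<omega>. (X \<omega> - c)\<^sup>2)"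
proof -
  have "(\<lambda>\<omega>. (X \<omega> - c)\<^sup>2) = (\<lambda>\<omega>. (X \<omega>)\<^sup>2 - 2 * c * X \<omega> + c\<^sup>2)"
    by (simp add: fun_eq_iff power2_diff algebra_simps)
  then have "expectation (\<lambda>\<omega>. (X \<omega> - c)\<^sup>2)
      = expectation (\<lambda>\<omega>. (X \<omega>)\<^sup>2) - 2 * c * expectation X + c\<^sup>2"
    using assms by (simp add: prob_space)
  also have "\<dots> = variance X + (expectation X - c)\<^sup>2"
    unfolding variance_eq[OF assms] by (simp add: power2_diff)
  finally show ?thesis by simp
qed

lemma (in prob_space) variance_diff_indep:
  fixes X Y :: "'a \<Rightarrow> real"
  assumes indep: "indep_var borel X borel Y"
    and X: "integrable M X" "integrable M (\<lambda>\<omega>. (X \<omega>)\<^sup>2)"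
    and Y: "integrable M Y" "integrable M (\<lambda>\<omega>. (Y \<omega>)\<^sup>2)"
  shows "variance (\<lambda>\<omega>. X \<omega> - Y \<omega>) = variance X + variance Y"
proof -
  have XY: "integrable M (\<lambda>\<omega>. X \<omega> * Y \<omega>)"
    by (rule indep_var_integrable[OF indep X(1) Y(1)])
  have sq: "(\<lambda>\<omega>. (X \<omega> - Y \<omega>)\<^sup>2) = (\<lambda>\<omega>. (X \<omega>)\<^sup>2 - 2 * (X \<omega> * Y \<omega>) + (Y \<omega>)\<^sup>2)"
    by (simp add: fun_eq_iff power2_diff algebra_simps)
  have "variance (\<lambda>\<omega>. X \<omega> - Y \<omega>)
      = expectation (\<lambda>\<omega>. (X \<omega> - Y \<omega>)\<^sup>2) - (expectation (\<lambda>\<omega>. X \<omega> - Y \<omega>))\<^sup>2"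
    using X Y XY by (intro variance_eq) (simp_all add: sq)
  also have "\<dots> = expectation (\<lambda>\<omega>. (X \<omega>)\<^sup>2) - 2 * expectation (\<lambda>\<omega>. X \<omega> * Y \<omega>)
      + expectation (\<lambda>\<omega>. (Y \<omega>)\<^sup>2) - (expectation X - expectation Y)\<^sup>2"
    using X Y XY by (simp add: sq)
  also have "expectation (\<lambda>\<omega>. X \<omega> * Y \<omega>) = expectation X * expectation Y"
    by (rule indep_var_lebesgue_integral[OF indep X(1) Y(1)])
  finally show ?thesis
    unfolding variance_eq[OF X] variance_eq[OF Y] by (simp add: power2_diff)
qed

lemma (in prob_space) indep_vars_indep_var_single_pair:
  fixes X :: "'i \<Rightarrow> 'a \<Rightarrow> real" and g :: "real \<Rightarrow> real" and h :: "real \<times> real \<Rightarrow> real"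
  assumes indep: "indep_vars (\<lambda>_. borel) X I"
    and "i \<in> I" "j \<in> I" "k \<in> I" "i \<noteq> j" "i \<noteq> k"
    and g: "g \<in> borel_measurable borel" and h: "h \<in> borel_measurable borel"
  shows "indep_var borel (\<lambda>\<omega>. g (X i \<omega>)) borel (\<lambda>\<omega>. h (X j \<omega>, X k \<omega>))"
proof -
  have "indep_var borel ((\<lambda>f. g (f i)) \<circ> (\<lambda>\<omega>. restrict (\<lambda>l. X l \<omega>) {i}))
      borel ((\<lambda>f. h (f j, f k)) \<circ> (\<lambda>\<omega>. restrict (\<lambda>l. X l \<omega>) {j, k}))"
    using assms
    by (intro indep_var_compose[OF indep_var_restrict[OF indep]])
       (auto intro!: measurable_compose[OF _ g] measurable_compose[OF _ h])
  then show ?thesis by (simp add: comp_def)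
qed

lemma (in prob_space) variance_square_shift_le:
  fixes X :: "'a \<Rightarrow> real"
  assumes X: "X \<in> borel_measurable M" "integrable M (\<lambda>\<omega>. X \<omega> ^ 4)"
  shows "variance (\<lambda>\<omega>. (X \<omega> + d)\<^sup>2) \<le> 6 * expectation (\<lambda>\<omega>. X \<omega> ^ 4) + 4 * d ^ 4"
proof -
  have int_shift: "integrable M (\<lambda>\<omega>. (X \<omega> + d) ^ k)" if "k \<le> 4" for k
    using integrable_diff_power[OF X, of "\<lambda>_. - d" k] that by simp
  have "variance (\<lambda>\<omega>. (X \<omega> + d)\<^sup>2) \<le> expectation (\<lambda>\<omega>. ((X \<omega> + d)\<^sup>2 - d\<^sup>2)\<^sup>2)"
    using int_shift[of 2] int_shift[of 4]
    by (intro variance_le_expectation_sq_dev) (simp_all add: power_mult[symmetric])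
  also have "\<dots> \<le> expectation (\<lambda>\<omega>. 6 * X \<omega> ^ 4 + 4 * d ^ 4)"
    using X square_shift_sq_le by (intro integral_mono') (simp_all add: zero_le_even_power)
  also have "\<dots> = 6 * expectation (\<lambda>\<omega>. X \<omega> ^ 4) + 4 * d ^ 4"
    using X by (simp add: prob_space)
  finally show ?thesis .
qed

lemma (in prob_space) variance_half_square_diff_le:
  fixes Y Z :: "'a \<Rightarrow> real"
  assumes Y: "Y \<in> borel_measurable M" "integrable M (\<lambda>\<omega>. Y \<omega> ^ 4)"
    and Z: "Z \<in> borel_measurable M" "integrable M (\<lambda>\<omega>. Z \<omega> ^ 4)"
  shows "variance (\<lambda>\<omega>. (Y \<omega> - Z \<omega>)\<^sup>2 / 2)
    \<le> 2 * expectation (\<lambda>\<omega>. Y \<omega> ^ 4) + 2 * expectation (\<lambda>\<omega>. Z \<omega> ^ 4)"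
proof -
  have int4: "integrable M (\<lambda>\<omega>. (Y \<omega> - Z \<omega>) ^ 4)"
    using integrable_diff_power[OF Y Z] by simp
  have "variance (\<lambda>\<omega>. (Y \<omega> - Z \<omega>)\<^sup>2 / 2) \<le> expectation (\<lambda>\<omega>. ((Y \<omega> - Z \<omega>)\<^sup>2 / 2 - 0)\<^sup>2)"
    using int4 integrable_diff_power[OF Y Z, of 2]
    by (intro variance_le_expectation_sq_dev) (simp_all add: power_divide power_mult[symmetric])
  also have "\<dots> = expectation (\<lambda>\<omega>. (Y \<omega> - Z \<omega>) ^ 4) / 4"
    by (simp add: power_divide power_mult[symmetric])
  also have "\<dots> \<le> expectation (\<lambda>\<omega>. 8 * Y \<omega> ^ 4 + 8 * Z \<omega> ^ 4) / 4"
    using int4 Y Z power4_diff_le by (intro divide_right_mono integral_mono) auto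
  also have "\<dots> = 2 * expectation (\<lambda>\<omega>. Y \<omega> ^ 4) + 2 * expectation (\<lambda>\<omega>. Z \<omega> ^ 4)"
    using Y Z by simp
  finally show ?thesis .
qed

lemma (in prob_space) variance_unbiased_sq_error_le:
  fixes A B C :: "'a \<Rightarrow> real"
  assumes indep: "indep_var borel (\<lambda>\<omega>. (A \<omega> + d)\<^sup>2) borel (\<lambda>\<omega>. (B \<omega> - C \<omega>)\<^sup>2 / 2)"
    and A: "A \<in> borel_measurable M" "integrable M (\<lambda>\<omega>. A \<omega> ^ 4)"
    and B: "B \<in> borel_measurable M" "integrable M (\<lambda>\<omega>. B \<omega> ^ 4)"
    and C: "C \<in> borel_measurable M" "integrable M (\<lambda>\<omega>. C \<omega> ^ 4)"
  shows "variance (\<lambda>\<omega>. (A \<omega> + d)\<^sup>2 - (B \<omega> - C \<omega>)\<^sup>2 / 2)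
    \<le> 6 * expectation (\<lambda>\<omega>. A \<omega> ^ 4) + 4 * d ^ 4
      + 2 * expectation (\<lambda>\<omega>. B \<omega> ^ 4) + 2 * expectation (\<lambda>\<omega>. C \<omega> ^ 4)"
proof -
  have int_shift: "integrable M (\<lambda>\<omega>. (A \<omega> + d) ^ k)" if "k \<le> 4" for k
    using integrable_diff_power[OF A, of "\<lambda>_. - d" k] that by simp
  have int_diff: "integrable M (\<lambda>\<omega>. (B \<omega> - C \<omega>) ^ k)" if "k \<le> 4" for k
    using integrable_diff_power[OF B C that] .
  have "variance (\<lambda>\<omega>. (A \<omega> + d)\<^sup>2 - (B \<omega> - C \<omega>)\<^sup>2 / 2)
      = variance (\<lambda>\<omega>. (A \<omega> + d)\<^sup>2) + variance (\<lambda>\<omega>. (B \<omega> - C \<omega>)\<^sup>2 / 2)"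
    using int_shift[of 2] int_shift[of 4] int_diff[of 2] int_diff[of 4]
    by (intro variance_diff_indep[OF indep]) (simp_all add: power_divide power_mult[symmetric])
  then show ?thesis
    using variance_square_shift_le[OF A, of d] variance_half_square_diff_le[OF B C] by linarith
qed

theorem lemmaE2:
  fixes M :: "'w measure"
    and x y :: "real^'n"
    and f :: "real^'n \<Rightarrow> real^'n"
    and a b c :: "'w \<Rightarrow> real^'n"
    and \<mu> :: "'n \<Rightarrow> nat \<Rightarrow> real"
    and \<gamma> \<alpha> :: real
  assumes "prob_space M"
    and indep: "prob_space.indep_vars M (\<lambda>_. borel) (entry_family a b c) UNIV"
    and int_a: "\<And>i. integrable M (\<lambda>\<omega>. (a \<omega> $ i) ^ 4)"
    and int_b: "\<And>i. integrable M (\<lambda>\<omega>. (b \<omega> $ i) ^ 4)"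
    and int_c: "\<And>i. integrable M (\<lambda>\<omega>. (c \<omega> $ i) ^ 4)"
    and mean_a: "\<And>i. prob_space.expectation M (\<lambda>\<omega>. a \<omega> $ i) = x $ i"
    and mean_b: "\<And>i. prob_space.expectation M (\<lambda>\<omega>. b \<omega> $ i) = x $ i"
    and mean_c: "\<And>i. prob_space.expectation M (\<lambda>\<omega>. c \<omega> $ i) = x $ i"
    and mom_a: "\<And>i k. k \<le> 4 \<Longrightarrow> prob_space.expectation M (\<lambda>\<omega>. (a \<omega> $ i - x $ i) ^ k) = \<mu> i k"
    and mom_b: "\<And>i k. k \<le> 4 \<Longrightarrow> prob_space.expectation M (\<lambda>\<omega>. (b \<omega> $ i - x $ i) ^ k) = \<mu> i k"
    and mom_c: "\<And>i k. k \<le> 4 \<Longrightarrow> prob_space.expectation M (\<lambda>\<omega>. (c \<omega> $ i - x $ i) ^ k) = \<mu> i k"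
    and gamma_def: "\<gamma> = (MAX i\<in>UNIV. \<bar>x $ i - f y $ i\<bar>)"
    and alpha: "\<And>i. max (\<mu> i 4) (max (\<mu> i 3 * \<gamma>) (\<gamma> ^ 4)) \<le> \<alpha>"
  shows "\<forall>i. prob_space.variance M
            (\<lambda>\<omega>. (a \<omega> $ i - f y $ i)\<^sup>2 - (b \<omega> $ i - c \<omega> $ i)\<^sup>2 / 2) \<le> 14 * \<alpha>"
proof
  fix i
  interpret prob_space M by fact
  define X where "X j \<omega> = entry_family a b c j \<omega> - x $ snd j" for j \<omega>
  define d where "d = x $ i - f y $ i"
  have indep_X: "indep_vars (\<lambda>_. borel) X UNIV"
    unfolding X_def using indep by (rule indep_vars_compose2) simp
  have entry_int: "integrable M (\<lambda>\<omega>. entry_family a b c (l, k) \<omega> ^ 4)" for l k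
    using int_a int_b int_c by (cases l) (simp_all add: entry_family_def)
  have X_int: "integrable M (\<lambda>\<omega>. X (l, k) \<omega> ^ 4)" for l k
    using indep entry_int integrable_diff_power[of "entry_family a b c (l, k)" "\<lambda>_. x $ k" 4]
    by (simp add: X_def indep_vars_def)
  have X_meas: "X (l, k) \<in> borel_measurable M" for l k
    using indep_X by (simp add: indep_vars_def)
  have half_sq_diff_meas: "(\<lambda>p. (fst p - snd p)\<^sup>2 / 2 :: real) \<in> borel_measurable borel"
    by (intro borel_measurable_continuous_onI continuous_intros) simp
  have "indep_var borel (\<lambda>\<omega>. (X (LA, i) \<omega> + d)\<^sup>2) borel (\<lambda>\<omega>. (X (LB, i) \<omega> - X (LC, i) \<omega>)\<^sup>2 / 2)"
    using half_sq_diff_meas indep_vars_indep_var_single_pair[OF indep_X, where g = "\<lambda>t. (t + d)\<^sup>2"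
        and h = "\<lambda>p. (fst p - snd p)\<^sup>2 / 2" and i = "(LA, i)" and j = "(LB, i)" and k = "(LC, i)"]
    by simp
  from variance_unbiased_sq_error_le[OF this X_meas X_int X_meas X_int X_meas X_int]
  have "variance (\<lambda>\<omega>. (a \<omega> $ i - f y $ i)\<^sup>2 - (b \<omega> $ i - c \<omega> $ i)\<^sup>2 / 2) \<le> 10 * \<mu> i 4 + 4 * d ^ 4"
    by (simp add: X_def entry_family_def d_def mom_a mom_b mom_c)
  moreover have "d ^ 4 \<le> \<gamma> ^ 4"
  proof -
    have "\<bar>d\<bar> \<le> \<gamma>"
      unfolding gamma_def d_def by (rule Max_ge) auto
    then show ?thesis
      using power_mono[of "\<bar>d\<bar>" \<gamma> 4] by (simp add: power_even_abs_numeral)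
  qed
  ultimately show "variance (\<lambda>\<omega>. (a \<omega> $ i - f y $ i)\<^sup>2 - (b \<omega> $ i - c \<omega> $ i)\<^sup>2 / 2) \<le> 14 * \<alpha>"
    using alpha[of i] by linarith
qed

end
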